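(* Let $(V,\langle\cdot\,,\cdot\rangle_V)$ be an admissible integral $\mathrm{Cl}_{r,s}$-module and $(U,(\cdot\,,\cdot)_U)$ an admissible integral $\mathrm{Cl}_{8,0}$-module with positive definite inner product $(\cdot\,,\cdot)_U$, such that the representations $J_{y_j}\in\mathrm{End}(U)$ permute the integral basis of $U$ up to sign for all orthonormal generators $y_1,\ldots,y_8$ of $\mathrm{Cl}_{8,0}$. Then $V\otimes U$ with the scalar product $\langle v\otimes u,v'\otimes u'\rangle=\langle v,v'\rangle_V(u,u')_U$ is (carries the structure of) an admissible integral $\mathrm{Cl}_{r+8,s}$-module.
   Context: A scalar product is a real symmetric non-degenerate bilinear form. $\mathrm{Cl}_{p,q}$ is the real Clifford algebra generated by $\mathbb R^{p,q}$ ($\mathbb R^{p+q}$ with quadratic form $x_1^2+\dots+x_p^2-x_{p+1}^2-\dots-x_{p+q}^2$) with relation $z^2=-\langle z,z\rangle\cdot1$; orthonormal generators $z_k$ satisfy $\langle z_k,z_l\rangle=0$ ($k\ne l$), $\langle z_k,z_k\rangle=\pm1$. A $\mathrm{Cl}_{p,q}$-module $V$ with representation $J$ is admissible if it carries a scalar product with $\langle J_zu,v\rangle_V=-\langle u,J_zv\rangle_V$ for all $z,u,v$; it is an admissible integral module if it has an integral basis, i.e. a basis $\{v_\alpha\}$ with $\langle v_\alpha,v_\beta\rangle_V=0$ ($\alpha\ne\beta$), $\langle v_\alpha,v_\alpha\rangle_V=\pm1$, and $\langle J_{z_k}v_\alpha,v_\beta\rangle_V\in\{1,-1,0\}$ for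 all orthonormal generators $z_k$ and all $\alpha,\beta$. An operator permutes a basis up to sign if it sends each basis vector to $\pm$ some basis vector. *)

theory Defs
  imports "HOL-Analysis.Analysis"
begin

text \<open>Finite-dimensional real vector spaces are modelled as coordinate spaces real^'n.
  Orthonormal generators z_0,...,z_(p+q-1) of R^{p,q} are the standard basis vectors;
  z_k with k < p has square norm +1, the others -1. A vector z of R^{p,q} is
  a function nat => real whose entries with index k < p+q are its coordinates.\<close>

definition sp :: "real^'n^'n \<Rightarrow> real^'n \<Rightarrow> real^'n \<Rightarrow> real" where
  "sp G u v = u \<bullet> (G *v v)"

definition scalar_product :: "real^'n^'n \<Rightarrow> bool" where
  "scalar_product G \<longleftrightarrow> transpose G = G \<and> invertible G"

definition qf :: "nat \<Rightarrow> nat \<Rightarrow> (nat \<Rightarrow> real) \<Rightarrow> real" where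
  "qf p q z = (\<Sum>k<p. (z k)^2) - (\<Sum>k\<in>{p..<p+q}. (z k)^2)"

definition Jz :: "nat \<Rightarrow> nat \<Rightarrow> (nat \<Rightarrow> real^'n^'n) \<Rightarrow> (nat \<Rightarrow> real) \<Rightarrow> real^'n^'n" where
  "Jz p q J z = (\<Sum>k<p+q. z k *\<^sub>R J k)"

text \<open>A representation of Cl_{p,q}: linear map z \<mapsto> J_z with J_z^2 = -<z,z> Id
  (universal property of the Clifford algebra); J k is the image of the generator z_k.\<close>
definition clifford_rep :: "nat \<Rightarrow> nat \<Rightarrow> (nat \<Rightarrow> real^'n^'n) \<Rightarrow> bool" where
  "clifford_rep p q J \<longleftrightarrow>
     (\<forall>z. Jz p q J z ** Jz p q J z = (- qf p q z) *\<^sub>R mat 1)"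

definition admissible :: "nat \<Rightarrow> nat \<Rightarrow> real^'n^'n \<Rightarrow> (nat \<Rightarrow> real^'n^'n) \<Rightarrow> bool" where
  "admissible p q G J \<longleftrightarrow> clifford_rep p q J \<and> scalar_product G \<and>
     (\<forall>z u v. sp G (Jz p q J z *v u) v = - sp G u (Jz p q J z *v v))"

definition is_basis :: "('n \<Rightarrow> real^'n) \<Rightarrow> bool" where
  "is_basis b \<longleftrightarrow> inj b \<and> independent (range b) \<and> span (range b) = UNIV"

definition integral_basis ::
  "nat \<Rightarrow> nat \<Rightarrow> real^'n^'n \<Rightarrow> (nat \<Rightarrow> real^'n^'n) \<Rightarrow> ('n \<Rightarrow> real^'n) \<Rightarrow> bool" where
  "integral_basis p q G J b \<longleftrightarrow> is_basis b \<and>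
     (\<forall>\<alpha> \<beta>. \<alpha> \<noteq> \<beta> \<longrightarrow> sp G (b \<alpha>) (b \<beta>) = 0) \<and>
     (\<forall>\<alpha>. sp G (b \<alpha>) (b \<alpha>) \<in> {1, -1}) \<and>
     (\<forall>k<p+q. \<forall>\<alpha> \<beta>. sp G (J k *v b \<alpha>) (b \<beta>) \<in> {1, -1, 0})"

definition admissible_integral ::
  "nat \<Rightarrow> nat \<Rightarrow> real^'n^'n \<Rightarrow> (nat \<Rightarrow> real^'n^'n) \<Rightarrow> bool" where
  "admissible_integral p q G J \<longleftrightarrow> admissible p q G J \<and> (\<exists>b. integral_basis p q G J b)"

definition permutes_basis_up_to_sign :: "real^'n^'n \<Rightarrow> ('n \<Rightarrow> real^'n) \<Rightarrow> bool" where
  "permutes_basis_up_to_sign A b \<longleftrightarrow>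
     (\<forall>\<alpha>. \<exists>\<beta>. A *v b \<alpha> = b \<beta> \<or> A *v b \<alpha> = - b \<beta>)"

definition tensor :: "real^'n \<Rightarrow> real^'m \<Rightarrow> real^('n \<times> 'm)" where
  "tensor v u = (\<chi> ij. v $ fst ij * u $ snd ij)"

end

theory Submission
  imports Defs
begin

text \<open>Let \<open>\<Omega> = K\<^sub>0 \<cdots> K\<^sub>7\<close> be the volume element of the \<open>Cl\<^sub>8\<^sub>,\<^sub>0\<close>-module \<open>U\<close>.
  Since 8 is even, \<open>\<Omega>\<close> anticommutes with every \<open>K\<^sub>j\<close>; since \<open>8\<cdot>9/2\<close> is even,
  \<open>\<Omega>\<^sup>2 = 1\<close>; and as a product of isometries with \<open>\<Omega>\<^sup>2 = 1\<close> it is self-adjoint.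
  Hence \<open>J\<^sub>k \<otimes> \<Omega>\<close> for the generators of \<open>\<real>\<^sup>r\<^sup>,\<^sup>s\<close> together with \<open>1 \<otimes> K\<^sub>j\<close> for the eight new
  positive generators satisfy the Clifford relations of \<open>Cl\<^sub>r\<^sub>+\<^sub>8\<^sub>,\<^sub>s\<close> and are skew for
  the product scalar product. The products of the two integral bases form an integral basis,
  because \<open>\<Omega>\<close> permutes the basis of \<open>U\<close> up to sign.\<close>

section \<open>Kronecker products\<close>

definition kron :: "real^'n^'m \<Rightarrow> real^'p^'q \<Rightarrow> real^('n \<times> 'p)^('m \<times> 'q)" where
  "kron A B = (\<chi> ij kl. A $ fst ij $ fst kl * B $ snd ij $ snd kl)"

lemma kron_nth [simp]: "kron A B $ (i, j) $ (k, l) = A $ i $ k * B $ j $ l"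
  by (simp add: kron_def)

lemma tensor_nth [simp]: "tensor v u $ (i, j) = v $ i * u $ j"
  by (simp add: tensor_def)

lemma kron_eqI: "(\<And>i j k l. X $ (i, j) $ (k, l) = Y $ (i, j) $ (k, l)) \<Longrightarrow> X = Y"
  by (simp add: vec_eq_iff)

lemma sum_UNIV_pair: "(\<Sum>x\<in>UNIV. f x) = (\<Sum>a\<in>UNIV. \<Sum>c\<in>UNIV. f (a, c))"
  by (simp add: UNIV_Times_UNIV[symmetric] sum.cartesian_product del: UNIV_Times_UNIV)

lemma matrix_mult_kron: "kron A B ** kron C D = kron (A ** C) (B ** D)"
proof (rule kron_eqI)
  fix i j k l
  have "(kron A B ** kron C D) $ (i, j) $ (k, l) =
      (\<Sum>a\<in>UNIV. \<Sum>c\<in>UNIV. (A $ i $ a * C $ a $ k) * (B $ j $ c * D $ c $ l))"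
    by (simp add: matrix_matrix_mult_def sum_UNIV_pair mult_ac)
  also have "\<dots> = kron (A ** C) (B ** D) $ (i, j) $ (k, l)"
    by (simp add: matrix_matrix_mult_def sum_product)
  finally show "(kron A B ** kron C D) $ (i, j) $ (k, l) = kron (A ** C) (B ** D) $ (i, j) $ (k, l)" .
qed

lemma kron_mult_tensor: "kron A B *v tensor v u = tensor (A *v v) (B *v u)"
proof -
  have "(kron A B *v tensor v u) $ (i, j) = tensor (A *v v) (B *v u) $ (i, j)" for i j
  proof -
    have "(kron A B *v tensor v u) $ (i, j) =
        (\<Sum>a\<in>UNIV. \<Sum>c\<in>UNIV. (A $ i $ a * v $ a) * (B $ j $ c * u $ c))"
      by (simp add: matrix_vector_mult_def sum_UNIV_pair mult_ac)
    also have "\<dots> = tensor (A *v v) (B *v u) $ (i, j)"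
      by (simp add: matrix_vector_mult_def sum_product)
    finally show ?thesis .
  qed
  then show ?thesis
    by (simp add: vec_eq_iff)
qed

lemma inner_tensor: "tensor v u \<bullet> tensor v' u' = (v \<bullet> v') * (u \<bullet> u')"
proof -
  have "tensor v u \<bullet> tensor v' u' = (\<Sum>a\<in>UNIV. \<Sum>c\<in>UNIV. (v $ a * v' $ a) * (u $ c * u' $ c))"
    by (simp add: inner_vec_def sum_UNIV_pair mult_ac)
  then show ?thesis
    by (simp add: sum_product inner_vec_def)
qed

lemma sp_kron_tensor: "sp (kron G H) (tensor v u) (tensor v' u') = sp G v v' * sp H u u'"
  by (simp add: sp_def kron_mult_tensor inner_tensor)

lemma transpose_kron: "transpose (kron A B) = kron (transpose A) (transpose B)"
  by (rule kron_eqI) (simp add: transpose_def)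

lemma kron_mat: "kron (mat a) (mat b) = mat (a * b)"
  by (rule kron_eqI) (simp add: mat_def)

lemma kron_add_left: "kron (A + B) C = kron A C + kron B C"
  by (rule kron_eqI) (simp add: algebra_simps)

lemma kron_add_right: "kron A (B + C) = kron A B + kron A C"
  by (rule kron_eqI) (simp add: algebra_simps)

lemma kron_scaleR_left: "kron (c *\<^sub>R A) B = c *\<^sub>R kron A B"
  by (rule kron_eqI) simp

lemma kron_scaleR_right: "kron A (c *\<^sub>R B) = c *\<^sub>R kron A B"
  by (rule kron_eqI) (simp add: algebra_simps)

lemma kron_uminus_left: "kron (- A) B = - kron A B"
  by (rule kron_eqI) simp

lemma kron_uminus_right: "kron A (- B) = - kron A B"
  by (rule kron_eqI) simp

lemma kron_zero_right: "kron A 0 = 0"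
  by (rule kron_eqI) simp

lemma kron_anticommutator_left:
  assumes "B ** D = D ** B"
  shows "kron A B ** kron C D + kron C D ** kron A B = kron (A ** C + C ** A) (B ** D)"
  using assms by (simp add: matrix_mult_kron kron_add_left)

lemma kron_anticommutator_right:
  assumes "A ** C = C ** A"
  shows "kron A B ** kron C D + kron C D ** kron A B = kron (A ** C) (B ** D + D ** B)"
  using assms by (simp add: matrix_mult_kron kron_add_right)

lemma matrix_add_rdistrib: "((A::real^'n^'m) + B) ** C = A ** C + B ** C"
  by (vector matrix_matrix_mult_def sum.distrib[symmetric] field_simps)

lemma matrix_mult_uminus_left: "(- A :: real^'n^'m) ** B = - (A ** B)"
  and matrix_mult_uminus_right: "(A :: real^'n^'m) ** (- B) = - (A ** B)"
  by (simp_all add: matrix_matrix_mult_def vec_eq_iff sum_negf)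

lemma matrix_vector_mult_uminus: "(- A :: real^'n^'m) *v x = - (A *v x)"
  by (simp add: matrix_vector_mult_def vec_eq_iff sum_negf)

lemma matrix_mult_sum_left: "(\<Sum>i\<in>S. f i) ** (B :: real^'n^'m) = (\<Sum>i\<in>S. f i ** B)"
  by (induction S rule: infinite_finite_induct) (auto simp: matrix_add_rdistrib)

lemma matrix_mult_sum_right: "(B :: real^'n^'m) ** (\<Sum>i\<in>S. f i) = (\<Sum>i\<in>S. B ** f i)"
  by (induction S rule: infinite_finite_induct) (auto simp: matrix_add_ldistrib)

lemma transpose_sum: "transpose (\<Sum>i\<in>S. f i) = (\<Sum>i\<in>S. transpose (f i :: real^'n^'m))"
  by (induction S rule: infinite_finite_induct) (auto simp: transpose_def vec_eq_iff)

lemma sp_matrix_left: "sp G (A *v u) v = u \<bullet> ((transpose A ** G) *v v)"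
proof -
  have "sp G (A *v u) v = (G *v v) \<bullet> (A *v u)"
    by (simp add: sp_def inner_commute)
  also have "\<dots> = ((G *v v) v* A) \<bullet> u"
    by (simp add: dot_lmul_matrix)
  also have "\<dots> = u \<bullet> (transpose A *v (G *v v))"
    by (simp add: inner_commute)
  finally show ?thesis
    by (simp add: matrix_vector_mul_assoc)
qed

lemma sp_matrix_right: "sp G u (A *v v) = u \<bullet> ((G ** A) *v v)"
  by (simp add: sp_def matrix_vector_mul_assoc)

lemma skew_adjoint_iff:
  "(\<forall>u v. sp G (A *v u) v = - sp G u (A *v v)) \<longleftrightarrow> transpose A ** G = - (G ** A)"
proof
  assume skew: "\<forall>u v. sp G (A *v u) v = - sp G u (A *v v)"
  have "(transpose A ** G) *v v = (- (G ** A)) *v v" for v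
  proof -
    let ?a = "(transpose A ** G) *v v" and ?b = "(G ** A) *v v"
    have "(?a + ?b) \<bullet> ?a = - ((?a + ?b) \<bullet> ?b)"
      using skew[rule_format, of "?a + ?b" v] unfolding sp_matrix_left sp_matrix_right .
    then have "(?a + ?b) \<bullet> (?a + ?b) = 0"
      by (simp add: inner_add_right)
    then show ?thesis
      by (simp add: matrix_vector_mult_uminus eq_neg_iff_add_eq_0)
  qed
  then show "transpose A ** G = - (G ** A)"
    by (simp add: matrix_eq)
qed (simp add: sp_matrix_left sp_matrix_right matrix_vector_mult_uminus)

section \<open>Clifford relations\<close>

definition gen_norm :: "nat \<Rightarrow> nat \<Rightarrow> real" where
  "gen_norm p k = (if k < p then 1 else -1)"

definition gen_form :: "nat \<Rightarrow> nat \<Rightarrow> nat \<Rightarrow> real" where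
  "gen_form p k l = (if k = l then gen_norm p k else 0)"

lemma qf_eq_sum: "qf p q z = (\<Sum>k<p+q. gen_norm p k * (z k)\<^sup>2)"
proof -
  have "{..<p+q} = {..<p} \<union> {p..<p+q}"
    by auto
  then have "(\<Sum>k<p+q. gen_norm p k * (z k)\<^sup>2) =
      (\<Sum>k<p. gen_norm p k * (z k)\<^sup>2) + (\<Sum>k\<in>{p..<p+q}. gen_norm p k * (z k)\<^sup>2)"
    by (metis (no_types, lifting) ivl_disj_int_one(2) finite_atLeastLessThan finite_lessThan
        sum.union_disjoint)
  then show ?thesis
    by (simp add: qf_def gen_norm_def sum_negf)
qed

lemma Jz_indicator:
  assumes "S \<subseteq> {..<p+q}"
  shows "Jz p q J (\<lambda>i. of_bool (i \<in> S)) = (\<Sum>k\<in>S. J k)"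
proof -
  have "Jz p q J (\<lambda>i. of_bool (i \<in> S)) = (\<Sum>k<p+q. if k \<in> S then J k else 0)"
    unfolding Jz_def by (intro sum.cong) auto
  also have "\<dots> = (\<Sum>k\<in>{..<p+q} \<inter> S. J k)"
    by (simp add: sum.inter_restrict)
  finally show ?thesis
    using assms by (simp add: Int_absorb1)
qed

lemma qf_indicator:
  assumes "S \<subseteq> {..<p+q}"
  shows "qf p q (\<lambda>i. of_bool (i \<in> S)) = (\<Sum>k\<in>S. gen_norm p k)"
proof -
  have "qf p q (\<lambda>i. of_bool (i \<in> S)) = (\<Sum>k<p+q. if k \<in> S then gen_norm p k else 0)"
    unfolding qf_eq_sum by (intro sum.cong) auto
  also have "\<dots> = (\<Sum>k\<in>{..<p+q} \<inter> S. gen_norm p k)"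
    by (simp add: sum.inter_restrict)
  finally show ?thesis
    using assms by (simp add: Int_absorb1)
qed

lemma clifford_rep_square_sum:
  assumes "clifford_rep p q J" and "S \<subseteq> {..<p+q}"
  shows "(\<Sum>k\<in>S. J k) ** (\<Sum>k\<in>S. J k) = (- (\<Sum>k\<in>S. gen_norm p k)) *\<^sub>R mat 1"
  using assms unfolding clifford_rep_def
  by (metis Jz_indicator qf_indicator)

lemma clifford_rep_square:
  assumes "clifford_rep p q J" and "k < p+q"
  shows "J k ** J k = (- gen_norm p k) *\<^sub>R mat 1"
  using clifford_rep_square_sum[OF assms(1), of "{k}"] assms(2) by simp

lemma clifford_rep_anticommute:
  assumes rep: "clifford_rep p q J" and "k < p+q" "l < p+q" "k \<noteq> l"
  shows "J k ** J l = - (J l ** J k)"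
proof -
  have "(J k + J l) ** (J k + J l) = (J k ** J k + J l ** J l) + (J k ** J l + J l ** J k)"
    by (simp add: matrix_add_ldistrib matrix_add_rdistrib)
  moreover have "(J k + J l) ** (J k + J l) = (- (gen_norm p k + gen_norm p l)) *\<^sub>R mat 1"
    using clifford_rep_square_sum[OF rep, of "{k, l}"] assms by simp
  ultimately have "J k ** J l + J l ** J k = 0"
    using clifford_rep_square[OF rep] assms by (simp add: algebra_simps)
  then show ?thesis
    by (simp add: eq_neg_iff_add_eq_0)
qed

lemma clifford_rep_if_relations:
  fixes J :: "nat \<Rightarrow> real^'n^'n"
  assumes rel: "\<forall>k<p+q. \<forall>l<p+q. J k ** J l + J l ** J k = (-2 * gen_form p k l) *\<^sub>R mat 1"
  shows "clifford_rep p q J"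
  unfolding clifford_rep_def
proof
  fix z
  let ?N = "{..<p+q}"
  define S where "S = (\<Sum>k\<in>?N. \<Sum>l\<in>?N. (z k * z l) *\<^sub>R (J k ** J l))"
  have "Jz p q J z ** Jz p q J z = (\<Sum>k\<in>?N. \<Sum>l\<in>?N. (z k * z l) *\<^sub>R (J l ** J k))"
    unfolding Jz_def
    by (simp add: matrix_mult_sum_left matrix_mult_sum_right matrix_scalar_ac
        scalar_matrix_assoc[symmetric] scaleR_sum_right)
  also have "\<dots> = S"
    unfolding S_def by (subst sum.swap) (simp add: mult.commute)
  finally have square: "Jz p q J z ** Jz p q J z = S" .
  \<comment> \<open>symmetrising the double sum brings in the anticommutators\<close>
  have "S + S = (\<Sum>k\<in>?N. \<Sum>l\<in>?N. (z k * z l) *\<^sub>R (J k ** J l + J l ** J k))"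
    unfolding S_def scaleR_add_right sum.distrib
    by (subst (2) sum.swap) (simp add: mult.commute)
  also have "\<dots> = (\<Sum>k\<in>?N. \<Sum>l\<in>?N. (z k * z l * (-2 * gen_form p k l)) *\<^sub>R mat 1)"
    using rel by (intro sum.cong refl) simp
  also have "\<dots> = (\<Sum>k\<in>?N. (-2 * (gen_norm p k * (z k)\<^sup>2)) *\<^sub>R mat 1)"
  proof (rule sum.cong [OF refl])
    fix k assume "k \<in> ?N"
    have "(\<Sum>l\<in>?N. (z k * z l * (-2 * gen_form p k l)) *\<^sub>R (mat 1 :: real^'n^'n)) =
        (\<Sum>l\<in>?N. if k = l then (-2 * (gen_norm p k * (z k)\<^sup>2)) *\<^sub>R mat 1 else 0)"
      by (intro sum.cong) (auto simp: gen_form_def power2_eq_square)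
    with \<open>k \<in> ?N\<close> show "(\<Sum>l\<in>?N. (z k * z l * (-2 * gen_form p k l)) *\<^sub>R (mat 1 :: real^'n^'n)) =
        (-2 * (gen_norm p k * (z k)\<^sup>2)) *\<^sub>R mat 1"
      by simp
  qed
  also have "\<dots> = (-2 * qf p q z) *\<^sub>R mat 1"
    by (simp add: qf_eq_sum scaleR_sum_left sum_distrib_left)
  finally have "(2::real) *\<^sub>R S = 2 *\<^sub>R ((- qf p q z) *\<^sub>R mat 1)"
    by (simp add: scaleR_2)
  then show "Jz p q J z ** Jz p q J z = (- qf p q z) *\<^sub>R mat 1"
    using square by (simp only: scaleR_cancel_left) simp
qed

lemma clifford_rep_iff:
  "clifford_rep p q (J :: nat \<Rightarrow> real^'n^'n) \<longleftrightarrow>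
    (\<forall>k<p+q. \<forall>l<p+q. J k ** J l + J l ** J k = (-2 * gen_form p k l) *\<^sub>R mat 1)"
proof
  assume rep: "clifford_rep p q J"
  show "\<forall>k<p+q. \<forall>l<p+q. J k ** J l + J l ** J k = (-2 * gen_form p k l) *\<^sub>R mat 1"
  proof (intro allI impI)
    fix k l assume "k < p+q" "l < p+q"
    then show "J k ** J l + J l ** J k = (-2 * gen_form p k l) *\<^sub>R mat 1"
    proof (cases "k = l")
      case True
      then show ?thesis
        using clifford_rep_square[OF rep \<open>k < p+q\<close>] by (simp add: gen_form_def scaleR_2[symmetric])
    next
      case False
      then show ?thesis
        using clifford_rep_anticommute[OF rep \<open>k < p+q\<close> \<open>l < p+q\<close>] by (simp add: gen_form_def)
    qed
  qed
qed (rule clifford_rep_if_relations)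

lemma transpose_Jz_skew:
  assumes "\<forall>k<p+q. transpose (J k) ** G = - (G ** J k)"
  shows "transpose (Jz p q J z) ** G = - (G ** Jz p q J z)"
proof -
  have "transpose (Jz p q J z) ** G = (\<Sum>k<p+q. z k *\<^sub>R (transpose (J k) ** G))"
    unfolding Jz_def
    by (simp add: transpose_sum transpose_scalar matrix_mult_sum_left scalar_matrix_assoc)
  also have "\<dots> = (\<Sum>k<p+q. - (z k *\<^sub>R (G ** J k)))"
    using assms by (intro sum.cong refl) simp
  also have "\<dots> = - (G ** Jz p q J z)"
    unfolding Jz_def
    by (simp add: sum_negf matrix_mult_sum_right matrix_scalar_ac scalar_matrix_assoc[symmetric])
  finally show ?thesis .
qed

lemma admissible_iff:
  "admissible p q G J \<longleftrightarrow>
    clifford_rep p q J \<and> scalar_product G \<and> (\<forall>k<p+q. transpose (J k) ** G = - (G ** J k))"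
proof -
  have "(\<forall>z u v. sp G (Jz p q J z *v u) v = - sp G u (Jz p q J z *v v)) \<longleftrightarrow>
      (\<forall>k<p+q. transpose (J k) ** G = - (G ** J k))"
  proof
    assume "\<forall>z u v. sp G (Jz p q J z *v u) v = - sp G u (Jz p q J z *v v)"
    then have skew: "transpose (Jz p q J z) ** G = - (G ** Jz p q J z)" for z
      by (simp add: skew_adjoint_iff)
    show "\<forall>k<p+q. transpose (J k) ** G = - (G ** J k)"
    proof (intro allI impI)
      fix k assume "k < p+q"
      then show "transpose (J k) ** G = - (G ** J k)"
        using skew[of "\<lambda>i. of_bool (i \<in> {k})"] Jz_indicator[of "{k}" p q J] by simp
    qed
  qed (simp add: skew_adjoint_iff transpose_Jz_skew)
  then show ?thesis
    by (simp add: admissible_def)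
qed

section \<open>The volume element of \<open>Cl\<^sub>8\<^sub>,\<^sub>0\<close>\<close>

primrec ordered_prod :: "(nat \<Rightarrow> real^'m^'m) \<Rightarrow> nat \<Rightarrow> real^'m^'m" where
  "ordered_prod K 0 = mat 1"
| "ordered_prod K (Suc n) = ordered_prod K n ** K n"

lemma ordered_prod_commute:
  assumes anticomm: "\<forall>i<N. \<forall>j<N. i \<noteq> j \<longrightarrow> K i ** K j = - (K j ** K i)"
    and "j < N" and "n \<le> N"
  shows "K j ** ordered_prod K n = (-1) ^ (if j < n then n - 1 else n) *\<^sub>R (ordered_prod K n ** K j)"
  using \<open>n \<le> N\<close>
proof (induction n)
  case (Suc n)
  define c :: real where "c = (-1) ^ (if j < n then n - 1 else n)"
  have "K j ** ordered_prod K (Suc n) = (K j ** ordered_prod K n) ** K n"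
    by (simp add: matrix_mul_assoc)
  also have "\<dots> = c *\<^sub>R (ordered_prod K n ** (K j ** K n))"
    using Suc by (simp add: c_def scalar_matrix_assoc matrix_mul_assoc)
  finally have step: "K j ** ordered_prod K (Suc n) = c *\<^sub>R (ordered_prod K n ** (K j ** K n))" .
  show ?case
  proof (cases "j = n")
    case True
    then show ?thesis
      using step by (simp add: c_def matrix_mul_assoc)
  next
    case False
    then have "K j ** K n = - (K n ** K j)"
      using anticomm \<open>j < N\<close> Suc.prems Suc_le_lessD by blast
    then have "K j ** ordered_prod K (Suc n) = (- c) *\<^sub>R (ordered_prod K (Suc n) ** K j)"
      using step by (simp add: matrix_mult_uminus_right matrix_mul_assoc)
    moreover have "- c = (-1) ^ (if j < Suc n then Suc n - 1 else Suc n)"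
      using False by (cases n) (auto simp: c_def)
    ultimately show ?thesis
      by simp
  qed
qed simp

lemma ordered_prod_square:
  assumes anticomm: "\<forall>i<N. \<forall>j<N. i \<noteq> j \<longrightarrow> K i ** K j = - (K j ** K i)"
    and square: "\<forall>i<N. K i ** K i = - mat 1"
    and "n \<le> N"
  shows "ordered_prod K n ** ordered_prod K n = (\<Prod>i<n. - ((-1) ^ i) :: real) *\<^sub>R mat 1"
  using \<open>n \<le> N\<close>
proof (induction n)
  case (Suc n)
  let ?P = "ordered_prod K n"
  have comm: "K n ** ?P = (-1) ^ n *\<^sub>R (?P ** K n)"
    using ordered_prod_commute[OF anticomm, of n n] Suc.prems by simp
  have "ordered_prod K (Suc n) ** ordered_prod K (Suc n) = ?P ** (K n ** ?P) ** K n"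
    by (simp add: matrix_mul_assoc)
  also have "\<dots> = (-1) ^ n *\<^sub>R (?P ** ?P ** (K n ** K n))"
    unfolding comm by (simp add: matrix_scalar_ac scalar_matrix_assoc[symmetric] matrix_mul_assoc)
  finally have "ordered_prod K (Suc n) ** ordered_prod K (Suc n) = (-1) ^ n *\<^sub>R (?P ** ?P ** (K n ** K n))" .
  then show ?case
    using Suc square by (simp add: matrix_mult_uminus_right)
qed simp

lemma ordered_prod_isometry:
  assumes "\<forall>i<N. transpose (K i) ** H ** K i = H" and "n \<le> N"
  shows "transpose (ordered_prod K n) ** H ** ordered_prod K n = H"
  using \<open>n \<le> N\<close>
proof (induction n)
  case (Suc n)
  have "transpose (ordered_prod K (Suc n)) ** H ** ordered_prod K (Suc n) =
      transpose (K n) ** (transpose (ordered_prod K n) ** H ** ordered_prod K n) ** K n"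
    by (simp add: matrix_transpose_mul matrix_mul_assoc)
  then show ?case
    using Suc assms(1) by simp
qed simp

lemma permutes_basis_up_to_sign_mult:
  assumes "permutes_basis_up_to_sign A b" and "permutes_basis_up_to_sign B b"
  shows "permutes_basis_up_to_sign (A ** B) b"
  unfolding permutes_basis_up_to_sign_def
proof
  fix \<alpha>
  obtain \<gamma> where "B *v b \<alpha> = b \<gamma> \<or> B *v b \<alpha> = - b \<gamma>"
    using assms(2) unfolding permutes_basis_up_to_sign_def by blast
  moreover obtain \<beta> where "A *v b \<gamma> = b \<beta> \<or> A *v b \<gamma> = - b \<beta>"
    using assms(1) unfolding permutes_basis_up_to_sign_def by blast
  ultimately show "\<exists>\<beta>. (A ** B) *v b \<alpha> = b \<beta> \<or> (A ** B) *v b \<alpha> = - b \<beta>"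
    by (auto simp: matrix_vector_mul_assoc[symmetric] vec.neg)
qed

lemma ordered_prod_permutes_basis:
  "\<forall>i<n. permutes_basis_up_to_sign (K i) b \<Longrightarrow> permutes_basis_up_to_sign (ordered_prod K n) b"
proof (induction n)
  case 0
  show ?case
    by (auto simp: permutes_basis_up_to_sign_def)
next
  case (Suc n)
  then show ?case
    by (simp add: permutes_basis_up_to_sign_mult)
qed

lemma Cl80_volume_element:
  fixes K :: "nat \<Rightarrow> real^'m^'m"
  assumes "admissible 8 0 H K" and "\<forall>j<8. permutes_basis_up_to_sign (K j) b"
  obtains \<Omega> where "\<Omega> ** \<Omega> = mat 1" and "\<forall>j<8. K j ** \<Omega> = - (\<Omega> ** K j)"
    and "transpose \<Omega> ** H = H ** \<Omega>" and "permutes_basis_up_to_sign \<Omega> b"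
proof
  let ?\<Omega> = "ordered_prod K 8"
  have rep: "clifford_rep 8 0 K" and skew: "\<forall>j<8. transpose (K j) ** H = - (H ** K j)"
    using assms(1) by (simp_all add: admissible_iff)
  have anticomm: "\<forall>i<8. \<forall>j<8. i \<noteq> j \<longrightarrow> K i ** K j = - (K j ** K i)"
    using clifford_rep_anticommute[OF rep] by (metis add_0_right)
  have square: "\<forall>i<8. K i ** K i = - mat 1"
    using clifford_rep_square[OF rep] by (simp add: gen_norm_def)
  have "\<forall>i<8. transpose (K i) ** H ** K i = H"
    using skew square by (simp add: matrix_mult_uminus_left matrix_mult_uminus_right
        matrix_mul_assoc[symmetric])
  then have isometry: "transpose ?\<Omega> ** H ** ?\<Omega> = H"
    using ordered_prod_isometry by blast
  show \<Omega>_square: "?\<Omega> ** ?\<Omega> = mat 1"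
    using ordered_prod_square[OF anticomm square, of 8]
    by (simp add: numeral_eq_Suc lessThan_Suc)
  show "\<forall>j<8. K j ** ?\<Omega> = - (?\<Omega> ** K j)"
    using ordered_prod_commute[OF anticomm] by simp
  \<comment> \<open>an isometry that is an involution is self-adjoint\<close>
  have "transpose ?\<Omega> ** H = (transpose ?\<Omega> ** H ** ?\<Omega>) ** ?\<Omega>"
    using \<Omega>_square by (simp add: matrix_mul_assoc[symmetric])
  then show "transpose ?\<Omega> ** H = H ** ?\<Omega>"
    using isometry by simp
  show "permutes_basis_up_to_sign ?\<Omega> b"
    using assms(2) by (simp add: ordered_prod_permutes_basis)
qed

section \<open>The tensor product module\<close>

text \<open>The generators of \<open>\<real>\<^sup>r\<^sup>+\<^sup>m\<^sup>,\<^sup>s\<close> are ordered as: the \<open>r\<close> positive ones of \<open>\<real>\<^sup>r\<^sup>,\<^sup>s\<close>,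
  then the \<open>m\<close> ones of \<open>\<real>\<^sup>m\<^sup>,\<^sup>0\<close>, then the \<open>s\<close> negative ones of \<open>\<real>\<^sup>r\<^sup>,\<^sup>s\<close>.\<close>

definition tensor_rep ::
  "nat \<Rightarrow> nat \<Rightarrow> (nat \<Rightarrow> real^'n^'n) \<Rightarrow> (nat \<Rightarrow> real^'m^'m) \<Rightarrow> real^'m^'m \<Rightarrow>
    nat \<Rightarrow> real^('n \<times> 'm)^('n \<times> 'm)" where
  "tensor_rep r m J K \<Omega> k =
    (if r \<le> k \<and> k < r + m then kron (mat 1) (K (k - r))
     else kron (J (if k < r then k else k - m)) \<Omega>)"

lemma tensor_rep_inner: "r \<le> k \<Longrightarrow> k < r + m \<Longrightarrow> tensor_rep r m J K \<Omega> k = kron (mat 1) (K (k - r))"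
  by (simp add: tensor_rep_def)

lemma tensor_rep_outer:
  "\<not> (r \<le> k \<and> k < r + m) \<Longrightarrow> tensor_rep r m J K \<Omega> k = kron (J (if k < r then k else k - m)) \<Omega>"
  unfolding tensor_rep_def by (rule if_not_P)

lemma tensor_rep_clifford:
  assumes J: "clifford_rep r s J" and K: "clifford_rep m 0 K"
    and \<Omega>_square: "\<Omega> ** \<Omega> = mat 1" and \<Omega>_anticomm: "\<forall>j<m. K j ** \<Omega> = - (\<Omega> ** K j)"
  shows "clifford_rep (r + m) s (tensor_rep r m J K \<Omega>)"
proof -
  let ?J = "tensor_rep r m J K \<Omega>"
  let ?inner = "\<lambda>k. r \<le> k \<and> k < r + m"
  let ?outer = "\<lambda>k. if k < r then k else k - m"
  have mixed: "?J k ** ?J l + ?J l ** ?J k = 0" if "?inner k" "\<not> ?inner l" for k l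
  proof -
    have "?J k ** ?J l + ?J l ** ?J k = kron (J (?outer l)) (K (k - r) ** \<Omega> + \<Omega> ** K (k - r))"
      using that by (simp add: tensor_rep_inner tensor_rep_outer kron_anticommutator_right)
    moreover have "K (k - r) ** \<Omega> = - (\<Omega> ** K (k - r))"
      using \<Omega>_anticomm that by auto
    ultimately show ?thesis
      by (simp add: kron_zero_right)
  qed
  have "?J k ** ?J l + ?J l ** ?J k = (-2 * gen_form (r + m) k l) *\<^sub>R mat 1"
    if "k < r + m + s" "l < r + m + s" for k l
  proof (cases "?inner k"; cases "?inner l")
    assume inner: "?inner k" "?inner l"
    then have "?J k ** ?J l + ?J l ** ?J k = kron (mat 1) (K (k - r) ** K (l - r) + K (l - r) ** K (k - r))"
      by (simp add: tensor_rep_inner kron_anticommutator_right)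
    also have "\<dots> = kron (mat 1) ((-2 * gen_form m (k - r) (l - r)) *\<^sub>R mat 1)"
      using K inner by (simp add: clifford_rep_iff less_diff_conv2)
    also have "gen_form m (k - r) (l - r) = gen_form (r + m) k l"
      using inner by (auto simp: gen_form_def gen_norm_def)
    finally show ?thesis
      by (simp add: kron_uminus_right kron_scaleR_right kron_mat)
  next
    assume outer: "\<not> ?inner k" "\<not> ?inner l"
    then have "?J k ** ?J l + ?J l ** ?J k =
        kron (J (?outer k) ** J (?outer l) + J (?outer l) ** J (?outer k)) (mat 1)"
      using \<Omega>_square by (simp only: tensor_rep_outer[OF outer(1)] tensor_rep_outer[OF outer(2)]
          kron_anticommutator_left)
    also have "\<dots> = kron ((-2 * gen_form r (?outer k) (?outer l)) *\<^sub>R mat 1) (mat 1)"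
    proof -
      have "?outer k < r + s" "?outer l < r + s"
        using outer that by auto
      with J show ?thesis
        unfolding clifford_rep_iff by presburger
    qed
    also have "gen_form r (?outer k) (?outer l) = gen_form (r + m) k l"
      using outer by (auto simp: gen_form_def gen_norm_def)
    finally show ?thesis
      by (simp add: kron_uminus_left kron_scaleR_left kron_mat)
  qed (use mixed[of k l] mixed[of l k] in \<open>auto simp: gen_form_def add.commute\<close>)
  then show ?thesis
    by (simp add: clifford_rep_iff add.assoc)
qed

lemma tensor_rep_skew:
  assumes J: "\<forall>k<r+s. transpose (J k) ** G = - (G ** J k)"
    and K: "\<forall>j<m. transpose (K j) ** H = - (H ** K j)"
    and \<Omega>: "transpose \<Omega> ** H = H ** \<Omega>"
    and "k < r + m + s"
  shows "transpose (tensor_rep r m J K \<Omega> k) ** kron G H = - (kron G H ** tensor_rep r m J K \<Omega> k)"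
proof (cases "r \<le> k \<and> k < r + m")
  case True
  then have "k - r < m"
    by auto
  with True K show ?thesis
    by (simp add: tensor_rep_inner transpose_kron matrix_mult_kron kron_uminus_right)
next
  case False
  then have "(if k < r then k else k - m) < r + s"
    using \<open>k < r + m + s\<close> by auto
  with J \<Omega> show ?thesis
    by (simp add: tensor_rep_outer[OF False] transpose_kron matrix_mult_kron kron_uminus_left)
qed

lemma scalar_product_kron:
  assumes "scalar_product G" and "scalar_product H"
  shows "scalar_product (kron G H)"
proof -
  obtain G' H' where "G ** G' = mat 1" and "H ** H' = mat 1"
    using assms by (meson invertible_right_inverse scalar_product_def)
  then have "kron G H ** kron G' H' = mat 1"
    by (simp add: matrix_mult_kron kron_mat)
  then show ?thesis
    using assms invertible_right_inverse by (auto simp: scalar_product_def transpose_kron)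
qed

lemma admissible_tensor_rep:
  assumes "admissible r s G J" and "admissible m 0 H K"
    and "\<Omega> ** \<Omega> = mat 1" and "\<forall>j<m. K j ** \<Omega> = - (\<Omega> ** K j)"
    and "transpose \<Omega> ** H = H ** \<Omega>"
  shows "admissible (r + m) s (kron G H) (tensor_rep r m J K \<Omega>)"
proof -
  have "clifford_rep r s J" "scalar_product G" "\<forall>k<r+s. transpose (J k) ** G = - (G ** J k)"
    using assms(1) by (simp_all add: admissible_iff)
  moreover have "clifford_rep m 0 K" "scalar_product H" "\<forall>j<m. transpose (K j) ** H = - (H ** K j)"
    using assms(2) by (simp_all add: admissible_iff)
  ultimately show ?thesis
    using assms(3-5) tensor_rep_clifford tensor_rep_skew scalar_product_kron
    unfolding admissible_iff by blast
qed

section \<open>Integral bases\<close>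

lemma orthogonal_is_basis:
  fixes f :: "'k::finite \<Rightarrow> real^'k"
  assumes orth: "\<forall>i j. i \<noteq> j \<longrightarrow> sp G (f i) (f j) = 0" and nonzero: "\<forall>i. sp G (f i) (f i) \<noteq> 0"
  shows "is_basis f"
proof -
  have inj: "inj f"
    by (rule injI) (metis orth nonzero)
  have indep: "independent (range f)"
    unfolding eucl.independent_explicit
  proof (intro conjI allI impI ballI)
    fix c v assume lincomb: "(\<Sum>v\<in>range f. c v *\<^sub>R v) = 0" and "v \<in> range f"
    then obtain i where i: "v = f i"
      by auto
    have "0 = sp G (\<Sum>j\<in>UNIV. c (f j) *\<^sub>R f j) (f i)"
      using lincomb by (simp add: sp_def sum.reindex inj)
    also have "\<dots> = (\<Sum>j\<in>UNIV. c (f j) * sp G (f j) (f i))"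
      by (simp add: sp_def inner_sum_left)
    also have "\<dots> = c (f i) * sp G (f i) (f i)"
      using orth by (subst sum.remove[of _ i]) auto
    finally show "c v = 0"
      using nonzero i by simp
  qed simp
  have "card (range f) = dim (UNIV :: (real^'k) set)"
    by (simp add: card_image inj)
  then have "span (range f) = UNIV"
    using eucl.card_eq_dim[of "range f" UNIV] indep by auto
  with inj indep show ?thesis
    by (simp add: is_basis_def)
qed

lemma integral_basis_sp_mem:
  assumes "integral_basis p q G J e"
  shows "sp G (e \<alpha>) (e \<beta>) \<in> {1, -1, 0}"
  using assms by (cases "\<alpha> = \<beta>") (auto simp: integral_basis_def)

lemma permutes_basis_sp_mem:
  assumes "permutes_basis_up_to_sign A b" and "integral_basis p q H K b"
  shows "sp H (A *v b \<alpha>) (b \<beta>) \<in> {1, -1, 0}"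
proof -
  obtain \<gamma> where "A *v b \<alpha> = b \<gamma> \<or> A *v b \<alpha> = - b \<gamma>"
    using assms(1) unfolding permutes_basis_up_to_sign_def by blast
  moreover have "sp H (- b \<gamma>) (b \<beta>) = - sp H (b \<gamma>) (b \<beta>)"
    by (simp add: sp_def)
  ultimately show ?thesis
    using integral_basis_sp_mem[OF assms(2), of \<gamma> \<beta>] by auto
qed

lemma sp_tensor_rep_basis_mem:
  assumes e: "integral_basis r s G J e" and b: "integral_basis m 0 H K b"
    and \<Omega>: "permutes_basis_up_to_sign \<Omega> b" and "k < r + m + s"
  shows "sp (kron G H) (tensor_rep r m J K \<Omega> k *v tensor (e \<alpha>) (b \<beta>)) (tensor (e \<alpha>') (b \<beta>'))
    \<in> {1, -1, 0}"
proof (cases "r \<le> k \<and> k < r + m")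
  case True
  then have "k - r < m + 0"
    by auto
  then have "sp H (K (k - r) *v b \<beta>) (b \<beta>') \<in> {1, -1, 0}"
    using b by (simp add: integral_basis_def)
  with True show ?thesis
    using integral_basis_sp_mem[OF e, of \<alpha> \<alpha>']
    by (auto simp: tensor_rep_inner kron_mult_tensor sp_kron_tensor)
next
  case False
  then have "(if k < r then k else k - m) < r + s"
    using \<open>k < r + m + s\<close> by auto
  then have "sp G (J (if k < r then k else k - m) *v e \<alpha>) (e \<alpha>') \<in> {1, -1, 0}"
    using e by (simp add: integral_basis_def)
  then show ?thesis
    using permutes_basis_sp_mem[OF \<Omega> b, of \<beta> \<beta>']
    by (auto simp: tensor_rep_outer[OF False] kron_mult_tensor sp_kron_tensor)
qed

lemma integral_basis_tensor_rep:
  assumes e: "integral_basis r s G J e" and b: "integral_basis m 0 H K b"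
    and \<Omega>: "permutes_basis_up_to_sign \<Omega> b"
  shows "integral_basis (r + m) s (kron G H) (tensor_rep r m J K \<Omega>)
    (\<lambda>x. tensor (e (fst x)) (b (snd x)))"
proof -
  let ?f = "\<lambda>x. tensor (e (fst x)) (b (snd x))"
  have sp_f: "sp (kron G H) (?f x) (?f y) = sp G (e (fst x)) (e (fst y)) * sp H (b (snd x)) (b (snd y))"
    for x y
    by (simp add: sp_kron_tensor)
  have orth: "\<forall>x y. x \<noteq> y \<longrightarrow> sp (kron G H) (?f x) (?f y) = 0"
    using e b unfolding sp_f integral_basis_def by (metis mult_zero_left mult_zero_right prod_eqI)
  have norm: "sp (kron G H) (?f x) (?f x) \<in> {1, -1}" for x
  proof -
    have "sp G (e (fst x)) (e (fst x)) \<in> {1, -1}" "sp H (b (snd x)) (b (snd x)) \<in> {1, -1}"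
      using e b by (simp_all add: integral_basis_def)
    then show ?thesis
      unfolding sp_f by auto
  qed
  have "is_basis ?f"
  proof (rule orthogonal_is_basis[OF orth])
    show "\<forall>x. sp (kron G H) (?f x) (?f x) \<noteq> 0"
      using norm by (metis insertE singletonD zero_neq_neg_one zero_neq_one)
  qed
  with orth norm show ?thesis
    using sp_tensor_rep_basis_mem[OF e b \<Omega>] by (simp add: integral_basis_def)
qed

theorem theorem7p2:
  fixes r s :: nat
    and G :: "real^'n^'n" and J :: "nat \<Rightarrow> real^'n^'n"
    and H :: "real^'m^'m" and K :: "nat \<Rightarrow> real^'m^'m" and b :: "'m \<Rightarrow> real^'m"
  assumes "admissible_integral r s G J"
    and "admissible 8 0 H K"
    and "\<forall>u. u \<noteq> 0 \<longrightarrow> sp H u u > 0"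
    and "integral_basis 8 0 H K b"
    and "\<forall>j<8. permutes_basis_up_to_sign (K j) b"
  shows "\<exists>(G' :: real^('n \<times> 'm)^('n \<times> 'm)) J'.
           (\<forall>v v' u u'. sp G' (tensor v u) (tensor v' u') = sp G v v' * sp H u u') \<and>
           admissible_integral (r + 8) s G' J'"
proof -
  obtain e where adm: "admissible r s G J" and e: "integral_basis r s G J e"
    using assms(1) unfolding admissible_integral_def by blast
  obtain \<Omega> where "\<Omega> ** \<Omega> = mat 1" "\<forall>j<8. K j ** \<Omega> = - (\<Omega> ** K j)"
    "transpose \<Omega> ** H = H ** \<Omega>" "permutes_basis_up_to_sign \<Omega> b"
    using Cl80_volume_element[OF assms(2,5)] .
  then have "admissible_integral (r + 8) s (kron G H) (tensor_rep r 8 J K \<Omega>)"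
    using admissible_tensor_rep[OF adm assms(2)] integral_basis_tensor_rep[OF e assms(4)]
    unfolding admissible_integral_def by blast
  then show ?thesis
    using sp_kron_tensor by blast
qed

end
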